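(* Let $n\ge1$. The matrix $D^n$ is positive semi-definite. For $j,k\in\{0,\dots,2^n-1\}$: $D^n_{jk}=0$ if $j,k$ have different parity; if $j,k$ have the same parity then $D^n_{jk}=1/2^n$ when $c_n(j)\equiv c_n(k)\pmod 4$ and $D^n_{jk}=-1/2^n$ when $c_n(j)\not\equiv c_n(k)\pmod 4$. Moreover $\sum_{j,k}D^n_{jk}=1$.
   Context: For $n\ge1$, an $n$-path is a string $\alpha_0\alpha_1\cdots\alpha_n$ with $\alpha_k\in\{0,1\}$, $\alpha_0=0$; the set $\Omega_n$ of $n$-paths is identified with $\{0,1,\dots,2^n-1\}$, the path $\omega_j$ (or simply $j$) being the one whose string $\alpha_0\cdots\alpha_n$ is the binary representation of $j$ (with $\alpha_n$ least significant). $D^n$ is the $2^n\times2^n$ matrix with entries $D^n_{jk}=D^n(\omega_j,\omega_k)$, where for $\omega=\alpha_0\cdots\alpha_n$, $\omega'=\alpha'_0\cdots\alpha'_n$, $D^n(\omega,\omega')=2^{-n}\prod_{k=1}^n i^{|\alpha_k-\alpha_{k-1}|}\prod_{k=1}^n i^{-|\alpha'_k-\alpha'_{k-1}|}\,\delta_{\alpha_n\alpha'_n}$ ($i=\sqrt{-1}$). $c_n(j)$ denotes the number of position changes of the path $\omega_j$, i.e. the number of $k\in\{1,\dots,n\}$ with $\alpha_k\ne\alpha_{k-1}$. *)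

theory Defs
  imports Complex_Main
begin

text \<open>The n-path omega_j, j < 2^n, is the string alpha_0 ... alpha_n given by the
  binary representation of j (alpha_n least significant): alpha_k = bit (n-k) of j.\<close>
definition path_bit :: "nat \<Rightarrow> nat \<Rightarrow> nat \<Rightarrow> nat" where
  "path_bit n j k = (j div 2 ^ (n - k)) mod 2"

definition path_phase :: "nat \<Rightarrow> nat \<Rightarrow> complex" where
  "path_phase n j = (\<Prod>k\<in>{1..n}.
      \<i> ^ nat \<bar>int (path_bit n j k) - int (path_bit n j (k - 1))\<bar>)"

text \<open>Matrix entry D^n_{jk}; the second product uses exponents -|...|, i.e. the inverse.\<close>
definition Dmat :: "nat \<Rightarrow> nat \<Rightarrow> nat \<Rightarrow> complex" where
  "Dmat n j k = (1 / 2 ^ n) * path_phase n j * inverse (path_phase n k)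
      * (if path_bit n j n = path_bit n k n then 1 else 0)"

definition changes :: "nat \<Rightarrow> nat \<Rightarrow> nat" where
  "changes n j = card {k \<in> {1..n}. path_bit n j k \<noteq> path_bit n j (k - 1)}"

definition psd_mat :: "nat \<Rightarrow> (nat \<Rightarrow> nat \<Rightarrow> complex) \<Rightarrow> bool" where
  "psd_mat N A \<longleftrightarrow>
     (\<forall>j<N. \<forall>k<N. A k j = cnj (A j k)) \<and>
     (\<forall>v :: nat \<Rightarrow> complex.
        Im (\<Sum>j<N. \<Sum>k<N. cnj (v j) * A j k * v k) = 0 \<and>
        Re (\<Sum>j<N. \<Sum>k<N. cnj (v j) * A j k * v k) \<ge> 0)"

end

theory Submission imports Defs begin

text \<open>Both the phase of a path and the entries of D only depend on the number of
  position changes: the phase of \<open>\<omega>\<^sub>j\<close> is \<open>i ^ c\<^sub>n(j)\<close>, so for paths ending at the same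
  point the entry is \<open>2\<^sup>-\<^sup>n i ^ (c\<^sub>n(j) - c\<^sub>n(k))\<close>, which is \<open>\<plusminus>2\<^sup>-\<^sup>n\<close> because \<open>c\<^sub>n(j)\<close> has the
  parity of \<open>j\<close>. The matrix is then a sum of two rank-one Gram matrices, one per endpoint,
  hence positive semi-definite. Its entry sum is \<open>2\<^sup>-\<^sup>n (|E\<^sub>n|\<^sup>2 + |O\<^sub>n|\<^sup>2)\<close> for the phase sums
  \<open>E\<^sub>n, O\<^sub>n\<close> over paths ending at 0 and 1; appending a step multiplies \<open>(E\<^sub>n, O\<^sub>n)\<close> by the
  matrix \<open>[[1, i], [i, 1]]\<close>, which is \<open>\<surd>2\<close> times a unitary, so \<open>|E\<^sub>n|\<^sup>2 + |O\<^sub>n|\<^sup>2 = 2\<^sup>n\<close>.\<close>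

lemma path_bit_last: "path_bit n j n = j mod 2"
  unfolding path_bit_def by simp

lemma path_bit_Suc: "k \<le> n \<Longrightarrow> path_bit (Suc n) j k = path_bit n (j div 2) k"
  unfolding path_bit_def by (simp add: Suc_diff_le div_mult2_eq)

lemma changes_eq_sum:
  "changes n j = (\<Sum>k\<in>{1..n}. if path_bit n j k \<noteq> path_bit n j (k - 1) then 1 else 0)"
  unfolding changes_def by (simp add: sum.inter_filter[symmetric])

lemma changes_Suc:
  "changes (Suc n) j = changes n (j div 2) + (if j mod 2 \<noteq> j div 2 mod 2 then 1 else 0)"
proof -
  have "path_bit (Suc n) j k = path_bit n (j div 2) k"
    and "path_bit (Suc n) j (k - 1) = path_bit n (j div 2) (k - 1)" if "k \<in> {1..n}" for k
    using that by (auto intro!: path_bit_Suc)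
  then have "(\<Sum>k\<in>{1..n}. if path_bit (Suc n) j k \<noteq> path_bit (Suc n) j (k - 1) then 1 else 0)
      = changes n (j div 2)"
    unfolding changes_eq_sum by (intro sum.cong) simp_all
  moreover have "path_bit (Suc n) j n = j div 2 mod 2"
    using path_bit_Suc[of n n j] path_bit_last[of n "j div 2"] by simp
  ultimately show ?thesis
    by (simp add: changes_eq_sum[of "Suc n"] path_bit_last)
qed

lemma changes_mod_2: "changes n j mod 2 = j mod 2" if "j < 2 ^ n"
  using that
proof (induction n arbitrary: j)
  case 0
  then show ?case by (simp add: changes_def)
next
  case (Suc n)
  then have "changes n (j div 2) mod 2 = j div 2 mod 2" by simp
  then show ?case unfolding changes_Suc by (auto simp: mod_Suc)
qed

lemma path_phase_eq: "path_phase n j = \<i> ^ changes n j"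
proof -
  have "path_phase n j
      = (\<Prod>k\<in>{1..n}. if path_bit n j k \<noteq> path_bit n j (k - 1) then \<i> else 1)"
    unfolding path_phase_def
    by (intro prod.cong refl) (auto simp: path_bit_def mod_2_eq_odd split: if_splits)
  then show ?thesis
    unfolding changes_def by (simp add: prod.If_cases Int_def)
qed

lemma inverse_i_power: "inverse (\<i> ^ m) = cnj (\<i> ^ m)"
  by (induction m) (auto simp: inverse_mult_distrib)

lemma i_power_mod_4: "\<i> ^ m = \<i> ^ (m mod 4)"
proof -
  have "\<i> ^ m = \<i> ^ (4 * (m div 4) + m mod 4)"
    by simp
  also have "\<dots> = (\<i> ^ 4) ^ (m div 4) * \<i> ^ (m mod 4)"
    by (simp only: power_add power_mult)
  also have "\<i> ^ 4 = (1 :: complex)"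
    by (simp add: numeral_eq_Suc)
  finally show ?thesis by simp
qed

lemma i_power_mult_cnj:
  assumes "a mod 2 = b mod 2"
  shows "\<i> ^ a * cnj (\<i> ^ b) = (if a mod 4 = b mod 4 then 1 else -1)"
proof -
  have "(a mod 4) mod 2 = (b mod 4) mod 2"
    using assms by (simp add: mod_mod_cancel)
  moreover have "a mod 4 \<in> {0, 1, 2, 3}" "b mod 4 \<in> {0, 1, 2, 3}" by auto
  ultimately have "\<i> ^ (a mod 4) * cnj (\<i> ^ (b mod 4)) = (if a mod 4 = b mod 4 then 1 else -1)"
    by (auto simp: numeral_3_eq_3)
  then show ?thesis
    using i_power_mod_4[of a] i_power_mod_4[of b] by simp
qed

definition parity_block :: "(nat \<Rightarrow> complex) \<Rightarrow> nat \<Rightarrow> nat \<Rightarrow> complex" where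
  "parity_block u j k = (if j mod 2 = k mod 2 then u j * cnj (u k) else 0)"

lemma Dmat_eq_parity_block:
  "Dmat n = (\<lambda>j k. of_real (1 / 2 ^ n) * parity_block (\<lambda>j. \<i> ^ changes n j) j k)"
  unfolding Dmat_def parity_block_def path_phase_eq inverse_i_power
  by (simp add: fun_eq_iff path_bit_last)

lemma parity_block_quadratic_form:
  "(\<Sum>j<N. \<Sum>k<N. cnj (v j) * parity_block u j k * v k)
    = of_real ((cmod (\<Sum>j<N. if even j then cnj (v j) * u j else 0))\<^sup>2
             + (cmod (\<Sum>j<N. if odd j then cnj (v j) * u j else 0))\<^sup>2)"
  unfolding of_real_add complex_norm_square cnj_sum sum_product sum.distrib[symmetric]
  by (intro sum.cong refl) (auto simp: parity_block_def mod_2_eq_odd)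

lemma parity_block_sum:
  "(\<Sum>j<N. \<Sum>k<N. parity_block u j k)
    = of_real ((cmod (\<Sum>j<N. if even j then u j else 0))\<^sup>2
             + (cmod (\<Sum>j<N. if odd j then u j else 0))\<^sup>2)"
  using parity_block_quadratic_form[of "\<lambda>_. 1" u N]
  by (simp only: complex_cnj_one mult_1 mult_1_right)

lemma psd_mat_parity_block:
  assumes "c \<ge> 0"
  shows "psd_mat N (\<lambda>j k. of_real c * parity_block u j k)"
proof -
  have "(\<Sum>j<N. \<Sum>k<N. cnj (v j) * (of_real c * parity_block u j k) * v k)
      = of_real c * (\<Sum>j<N. \<Sum>k<N. cnj (v j) * parity_block u j k * v k)" for v
    unfolding sum_distrib_left by (intro sum.cong refl) (simp add: ac_simps)
  then show ?thesis
    unfolding psd_mat_def parity_block_quadratic_form using assms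
    by (auto simp: parity_block_def simp del: of_real_add)
qed

definition even_phase_sum :: "nat \<Rightarrow> complex" where
  "even_phase_sum n = (\<Sum>j<2 ^ n. if even j then \<i> ^ changes n j else 0)"

definition odd_phase_sum :: "nat \<Rightarrow> complex" where
  "odd_phase_sum n = (\<Sum>j<2 ^ n. if odd j then \<i> ^ changes n j else 0)"

lemma sum_lessThan_double: "(\<Sum>j<2 * (m :: nat). f j) = (\<Sum>j<m. f (2 * j) + f (2 * j + 1))"
  by (induction m) (simp_all add: algebra_simps)

lemma even_phase_sum_Suc: "even_phase_sum (Suc n) = even_phase_sum n + \<i> * odd_phase_sum n"
proof -
  have "even_phase_sum (Suc n) = (\<Sum>j<2 ^ n. \<i> ^ changes (Suc n) (2 * j))"
    unfolding even_phase_sum_def by (simp add: sum_lessThan_double)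
  also have "\<dots> = (\<Sum>j<2 ^ n. (if even j then \<i> ^ changes n j else 0)
                               + \<i> * (if odd j then \<i> ^ changes n j else 0))"
    by (intro sum.cong refl) (auto simp: changes_Suc mod_2_eq_odd)
  finally show ?thesis
    unfolding even_phase_sum_def odd_phase_sum_def by (simp add: sum.distrib sum_distrib_left)
qed

lemma odd_phase_sum_Suc: "odd_phase_sum (Suc n) = \<i> * even_phase_sum n + odd_phase_sum n"
proof -
  have "odd_phase_sum (Suc n) = (\<Sum>j<2 ^ n. \<i> ^ changes (Suc n) (2 * j + 1))"
    unfolding odd_phase_sum_def by (simp add: sum_lessThan_double)
  also have "\<dots> = (\<Sum>j<2 ^ n. \<i> * (if even j then \<i> ^ changes n j else 0)
                               + (if odd j then \<i> ^ changes n j else 0))"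
    by (intro sum.cong refl) (auto simp: changes_Suc mod_2_eq_odd)
  finally show ?thesis
    unfolding even_phase_sum_def odd_phase_sum_def by (simp add: sum.distrib sum_distrib_left)
qed

lemma phase_sums_norm: "(cmod (even_phase_sum n))\<^sup>2 + (cmod (odd_phase_sum n))\<^sup>2 = 2 ^ n"
proof (induction n)
  case 0
  then show ?case by (simp add: even_phase_sum_def odd_phase_sum_def changes_def)
next
  case (Suc n)
  have "complex_of_real ((cmod (even_phase_sum (Suc n)))\<^sup>2 + (cmod (odd_phase_sum (Suc n)))\<^sup>2)
      = 2 * complex_of_real ((cmod (even_phase_sum n))\<^sup>2 + (cmod (odd_phase_sum n))\<^sup>2)"
    unfolding of_real_add complex_norm_square even_phase_sum_Suc odd_phase_sum_Suc
    by (simp add: algebra_simps)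
  then show ?case
    using Suc.IH by (metis of_real_eq_iff of_real_mult of_real_numeral power_Suc)
qed

theorem theorem2p1:
  fixes n :: nat
  assumes "n \<ge> 1"
  shows "psd_mat (2 ^ n) (Dmat n)
    \<and> (\<forall>j < 2 ^ n. \<forall>k < 2 ^ n.
         (j mod 2 \<noteq> k mod 2 \<longrightarrow> Dmat n j k = 0) \<and>
         (j mod 2 = k mod 2 \<longrightarrow>
            (changes n j mod 4 = changes n k mod 4 \<longrightarrow> Dmat n j k = 1 / 2 ^ n) \<and>
            (\<not> changes n j mod 4 = changes n k mod 4 \<longrightarrow> Dmat n j k = - 1 / 2 ^ n)))
    \<and> (\<Sum>j < 2 ^ n. \<Sum>k < 2 ^ n. Dmat n j k) = 1"
proof (intro conjI allI impI)
  show "psd_mat (2 ^ n) (Dmat n)"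
    unfolding Dmat_eq_parity_block by (rule psd_mat_parity_block) simp
  have "(\<Sum>j<2 ^ n. \<Sum>k<2 ^ n. Dmat n j k)
      = of_real (1 / 2 ^ n) * of_real ((cmod (even_phase_sum n))\<^sup>2 + (cmod (odd_phase_sum n))\<^sup>2)"
    unfolding Dmat_eq_parity_block sum_distrib_left[symmetric] parity_block_sum
      even_phase_sum_def odd_phase_sum_def ..
  then show "(\<Sum>j<2 ^ n. \<Sum>k<2 ^ n. Dmat n j k) = 1"
    by (simp add: phase_sums_norm del: of_real_add)
  fix j k :: nat
  assume "j < 2 ^ n" "k < 2 ^ n"
  show "j mod 2 \<noteq> k mod 2 \<Longrightarrow> Dmat n j k = 0"
    by (simp add: Dmat_eq_parity_block parity_block_def)
  assume parity: "j mod 2 = k mod 2"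
  with \<open>j < 2 ^ n\<close> \<open>k < 2 ^ n\<close> have "changes n j mod 2 = changes n k mod 2"
    by (simp add: changes_mod_2)
  then have "Dmat n j k = of_real (1 / 2 ^ n)
      * (if changes n j mod 4 = changes n k mod 4 then 1 else -1)"
    unfolding Dmat_eq_parity_block parity_block_def by (simp only: if_P[OF parity] i_power_mult_cnj)
  then show "changes n j mod 4 = changes n k mod 4 \<Longrightarrow> Dmat n j k = 1 / 2 ^ n"
    and "changes n j mod 4 \<noteq> changes n k mod 4 \<Longrightarrow> Dmat n j k = - 1 / 2 ^ n"
    by simp_all
qed

end
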